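(* A set $S\subseteq\mathbb{N}^{\mathbb{N}}$ is guessable if and only if it is defined by some sentence $\forall x\,\exists y\,\phi$ of $\mathscr{L}_{\max}$ and also by some sentence $\exists x\,\forall y\,\psi$ of $\mathscr{L}_{\max}$, where $\phi$ and $\psi$ are quantifier-free.
   Context: A function $G:\mathbb{N}^{<\mathbb{N}}\to\{0,1\}$ ($\mathbb{N}^{<\mathbb{N}}$ = finite sequences of naturals) is a guesser for $S\subseteq\mathbb{N}^{\mathbb{N}}$ if for every $f:\mathbb{N}\to\mathbb{N}$ there is $m>0$ such that for all $n>m$, $G(f(0),\ldots,f(n))$ equals $1$ if $f\in S$ and $0$ if $f\notin S$; $S$ is guessable if it has a guesser. The language $\mathscr{L}_{\max}$ is a first-order language extended with ellipses: constant symbols $\mathbf{n}$ (also $\bar n$) for each $n\in\mathbb{N}$; an $n$-ary function symbol $\tilde w$ for each $w:\mathbb{N}^n\to\mathbb{N}$ ($n>0$); an $n$-ary predicate symbol $\tilde p$ for each $p\subseteq\mathbb{N}^n$ ($n>0$); an $\mathbb{N}^{<\mathbb{N}}$-ary function symbol $\tilde G$ for each $G:\mathbb{N}^{<\mathbb{N}}\to\mathbb{N}$ (applicable to any finite number of arguments); a unary function symbol $\mathbf{f}$; and a symbol $\cdots_x$ for each variable $x$. Besides the usual terms, for $\mathbb{N}^{<\mathbb{N}}$-ary $G$, terms $u,v$ and variable $x$, $G(u(\mathbf{0}),\cdots_x,u(v))$ is a term with free variables $(FV(u)\setminus\{x\})\cup FV(v)$. Formulas are built as usual. For $f:\mathbb{N}\to\mathbb{N}$,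 $\mathscr{M}_f$ is the structure on $\mathbb{N}$ interpreting every symbol as the object it names and $\mathbf{f}$ as $f$; terms are evaluated as usual, plus $G(u(\mathbf{0}),\cdots_x,u(v))^{s}=G\big(u(x|\mathbf{0})^{s},\ldots,u(x|\overline{v^{s}})^{s}\big)$ under an assignment $s$, where $u(x|c)$ is substitution of the constant $c$ for $x$ in $u$. A sentence $\phi$ defines $S\subseteq\mathbb{N}^{\mathbb{N}}$ if for every $f:\mathbb{N}\to\mathbb{N}$, $\mathscr{M}_f\models\phi$ iff $f\in S$. *)

theory Defs
  imports Main
begin

text \<open>Symbols that
name semantic objects carry that object (the symbol tilde-w names w, etc.).
An n-ary function w : N^n -> N is represented by a function on lists together
with its arity n; only its values on lists of length n matter.\<close>

datatype trm =
    Var nat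
  | Cst nat
  | FnSym nat "nat list \<Rightarrow> nat" "trm list"
  | GSym "nat list \<Rightarrow> nat" "trm list"
  | FSym trm
  | Ell "nat list \<Rightarrow> nat" trm nat trm       \<comment> \<open>Ell G u x v  =  G(u(0), ..._x, u(v))\<close>

datatype fm =
    FFalse
  | Eq trm trm
  | PredSym nat "nat list \<Rightarrow> bool" "trm list"
  | Neg fm
  | Conj fm fm
  | Disj fm fm
  | Imp fm fm
  | All nat fm
  | Ex nat fm

fun wf_trm :: "trm \<Rightarrow> bool" where
  "wf_trm (Var x) = True"
| "wf_trm (Cst n) = True"
| "wf_trm (FnSym n w ts) = (0 < n \<and> length ts = n \<and> (\<forall>t\<in>set ts. wf_trm t))"
| "wf_trm (GSym g ts) = (\<forall>t\<in>set ts. wf_trm t)"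
| "wf_trm (FSym t) = wf_trm t"
| "wf_trm (Ell g u x v) = (wf_trm u \<and> wf_trm v)"

fun wf_fm :: "fm \<Rightarrow> bool" where
  "wf_fm FFalse = True"
| "wf_fm (Eq t u) = (wf_trm t \<and> wf_trm u)"
| "wf_fm (PredSym n p ts) = (0 < n \<and> length ts = n \<and> (\<forall>t\<in>set ts. wf_trm t))"
| "wf_fm (Neg a) = wf_fm a"
| "wf_fm (Conj a b) = (wf_fm a \<and> wf_fm b)"
| "wf_fm (Disj a b) = (wf_fm a \<and> wf_fm b)"
| "wf_fm (Imp a b) = (wf_fm a \<and> wf_fm b)"
| "wf_fm (All x a) = wf_fm a"
| "wf_fm (Ex x a) = wf_fm a"

fun fv_trm :: "trm \<Rightarrow> nat set" where
  "fv_trm (Var x) = {x}"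
| "fv_trm (Cst n) = {}"
| "fv_trm (FnSym n w ts) = (\<Union>t\<in>set ts. fv_trm t)"
| "fv_trm (GSym g ts) = (\<Union>t\<in>set ts. fv_trm t)"
| "fv_trm (FSym t) = fv_trm t"
| "fv_trm (Ell g u x v) = (fv_trm u - {x}) \<union> fv_trm v"

fun fv_fm :: "fm \<Rightarrow> nat set" where
  "fv_fm FFalse = {}"
| "fv_fm (Eq t u) = fv_trm t \<union> fv_trm u"
| "fv_fm (PredSym n p ts) = (\<Union>t\<in>set ts. fv_trm t)"
| "fv_fm (Neg a) = fv_fm a"
| "fv_fm (Conj a b) = fv_fm a \<union> fv_fm b"
| "fv_fm (Disj a b) = fv_fm a \<union> fv_fm b"
| "fv_fm (Imp a b) = fv_fm a \<union> fv_fm b"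
| "fv_fm (All x a) = fv_fm a - {x}"
| "fv_fm (Ex x a) = fv_fm a - {x}"

definition sentence :: "fm \<Rightarrow> bool" where
  "sentence \<phi> \<longleftrightarrow> wf_fm \<phi> \<and> fv_fm \<phi> = {}"

fun qfree :: "fm \<Rightarrow> bool" where
  "qfree FFalse = True"
| "qfree (Eq t u) = True"
| "qfree (PredSym n p ts) = True"
| "qfree (Neg a) = qfree a"
| "qfree (Conj a b) = (qfree a \<and> qfree b)"
| "qfree (Disj a b) = (qfree a \<and> qfree b)"
| "qfree (Imp a b) = (qfree a \<and> qfree b)"
| "qfree (All x a) = False"
| "qfree (Ex x a) = False"

text \<open>The ellipsis term
G(u(0), ..._x, u(v)) evaluates to G(u(x|0)^s, ..., u(x|v^s)^s); evaluating the
substitution instance u(x|c) under s is evaluating u under s with x reassigned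
to c.\<close>
fun eval :: "(nat \<Rightarrow> nat) \<Rightarrow> (nat \<Rightarrow> nat) \<Rightarrow> trm \<Rightarrow> nat" where
  "eval f s (Var x) = s x"
| "eval f s (Cst n) = n"
| "eval f s (FnSym n w ts) = w (map (eval f s) ts)"
| "eval f s (GSym g ts) = g (map (eval f s) ts)"
| "eval f s (FSym t) = f (eval f s t)"
| "eval f s (Ell g u x v) = g (map (\<lambda>i. eval f (s(x := i)) u) [0..<Suc (eval f s v)])"

fun sat :: "(nat \<Rightarrow> nat) \<Rightarrow> (nat \<Rightarrow> nat) \<Rightarrow> fm \<Rightarrow> bool" where
  "sat f s FFalse = False"
| "sat f s (Eq t u) = (eval f s t = eval f s u)"
| "sat f s (PredSym n p ts) = p (map (eval f s) ts)"
| "sat f s (Neg a) = (\<not> sat f s a)"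
| "sat f s (Conj a b) = (sat f s a \<and> sat f s b)"
| "sat f s (Disj a b) = (sat f s a \<or> sat f s b)"
| "sat f s (Imp a b) = (sat f s a \<longrightarrow> sat f s b)"
| "sat f s (All x a) = (\<forall>n. sat f (s(x := n)) a)"
| "sat f s (Ex x a) = (\<exists>n. sat f (s(x := n)) a)"

definition models :: "(nat \<Rightarrow> nat) \<Rightarrow> fm \<Rightarrow> bool" where
  "models f \<phi> \<longleftrightarrow> (\<forall>s. sat f s \<phi>)"

definition defines_set :: "fm \<Rightarrow> (nat \<Rightarrow> nat) set \<Rightarrow> bool" where
  "defines_set \<phi> S \<longleftrightarrow> sentence \<phi> \<and> (\<forall>f. models f \<phi> \<longleftrightarrow> f \<in> S)"

definition guesser :: "(nat list \<Rightarrow> nat) \<Rightarrow> (nat \<Rightarrow> nat) set \<Rightarrow> bool" where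
  "guesser G S \<longleftrightarrow> (\<forall>\<sigma>. G \<sigma> \<in> {0, 1}) \<and>
     (\<forall>f. \<exists>m>0. \<forall>n>m. G (map f [0..<Suc n]) = (if f \<in> S then 1 else 0))"

definition guessable :: "(nat \<Rightarrow> nat) set \<Rightarrow> bool" where
  "guessable S \<longleftrightarrow> (\<exists>G. guesser G S)"

end

theory Submission
  imports Defs
begin

text \<open>A quantifier-free formula of L_max inspects only finitely many values of f, so its truth
  value is locally constant in f. Conversely, a guesser G is captured by the quantifier-free
  formula G(f(0), ..., f(x + y)) = 1: as G is eventually correct, f belongs to S iff this holds for
  arbitrarily large x + y, iff it holds for all large x + y. For the converse, enumerate in one
  sequence the witnesses a proving f in S (via the matrix psi) and those proving f not in S (via
  the negated matrix phi), and guess according to the least hypothesis not yet refuted by the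
  observed prefix of f: by local constancy every false hypothesis below the least true one is
  refuted after finitely many observations, while a true one never is.\<close>

text \<open>Continuity at f for the product topology on nat \<Rightarrow> nat and a discrete codomain.\<close>
definition locally_constant_at :: "((nat \<Rightarrow> nat) \<Rightarrow> 'a) \<Rightarrow> (nat \<Rightarrow> nat) \<Rightarrow> bool" where
  "locally_constant_at F f \<longleftrightarrow> (\<exists>N. \<forall>g. (\<forall>i<N. g i = f i) \<longrightarrow> F g = F f)"

lemma locally_constant_atI:
  assumes "\<And>g. \<forall>i<N. g i = f i \<Longrightarrow> F g = F f"
  shows "locally_constant_at F f"
  using assms unfolding locally_constant_at_def by blast

lemma locally_constant_at_const: "locally_constant_at (\<lambda>g. c) f"
  by (rule locally_constant_atI) (rule refl)

lemma locally_constant_at_app: "locally_constant_at (\<lambda>g. g i) f"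
  by (rule locally_constant_atI[of "Suc i"]) simp

lemma locally_constant_at_subst:
  assumes "locally_constant_at F f" and "locally_constant_at (\<lambda>g. H g (F f)) f"
  shows "locally_constant_at (\<lambda>g. H g (F g)) f"
proof -
  obtain N N' where N: "\<And>g. \<forall>i<N. g i = f i \<Longrightarrow> F g = F f"
    and N': "\<And>g. \<forall>i<N'. g i = f i \<Longrightarrow> H g (F f) = H f (F f)"
    using assms unfolding locally_constant_at_def by blast
  show ?thesis
  proof (rule locally_constant_atI[of "max N N'"])
    fix g assume agree: "\<forall>i<max N N'. g i = f i"
    have "F g = F f" and "H g (F f) = H f (F f)"
      by (rule N, use agree in simp) (rule N', use agree in simp)
    then show "H g (F g) = H f (F f)"
      by simp
  qed
qed

lemma locally_constant_at_comp:
  assumes "locally_constant_at F f"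
  shows "locally_constant_at (\<lambda>g. h (F g)) f"
  using assms locally_constant_at_const by (rule locally_constant_at_subst)

lemma locally_constant_at_comp2:
  assumes "locally_constant_at F f" and "locally_constant_at F' f"
  shows "locally_constant_at (\<lambda>g. h (F g) (F' g)) f"
  using assms(1) locally_constant_at_comp[OF assms(2)] by (rule locally_constant_at_subst)

lemma locally_constant_at_apply:
  assumes "locally_constant_at F f"
  shows "locally_constant_at (\<lambda>g. g (F g)) f"
  using assms locally_constant_at_app by (rule locally_constant_at_subst)

lemma locally_constant_at_map:
  "(\<And>x. x \<in> set xs \<Longrightarrow> locally_constant_at (\<lambda>g. F g x) f) \<Longrightarrow>
    locally_constant_at (\<lambda>g. map (F g) xs) f"
proof (induction xs)
  case Nil
  show ?case
    by (simp add: locally_constant_at_const)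
next
  case (Cons x xs)
  have "locally_constant_at (\<lambda>g. F g x) f" and "locally_constant_at (\<lambda>g. map (F g) xs) f"
    using Cons by simp_all
  then have "locally_constant_at (\<lambda>g. F g x # map (F g) xs) f"
    by (rule locally_constant_at_comp2)
  then show ?case
    by simp
qed

lemma locally_constant_at_eval: "locally_constant_at (\<lambda>g. eval g s t) f"
proof (induction t arbitrary: s)
  case (FnSym n w ts)
  then show ?case
    unfolding eval.simps by (rule locally_constant_at_comp[OF locally_constant_at_map])
next
  case (GSym G ts)
  then show ?case
    unfolding eval.simps by (rule locally_constant_at_comp[OF locally_constant_at_map])
next
  case (FSym t)
  then show ?case
    unfolding eval.simps by (rule locally_constant_at_apply)
next
  case (Ell G u x v)
  have "locally_constant_at (\<lambda>g. G (map (\<lambda>i. eval g (s(x := i)) u) [0..<Suc k])) f" for k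
    by (rule locally_constant_at_comp[OF locally_constant_at_map]) (rule Ell.IH(1))
  then show ?case
    unfolding eval.simps by (rule locally_constant_at_subst[OF Ell.IH(2)])
qed (simp_all add: locally_constant_at_const)

lemma locally_constant_at_sat:
  "qfree \<phi> \<Longrightarrow> locally_constant_at (\<lambda>g. sat g s \<phi>) f"
proof (induction \<phi>)
  case (Eq t u)
  show ?case
    unfolding sat.simps by (rule locally_constant_at_comp2) (rule locally_constant_at_eval)+
next
  case (PredSym n p ts)
  show ?case
    unfolding sat.simps
    by (rule locally_constant_at_comp[OF locally_constant_at_map]) (rule locally_constant_at_eval)
next
  case (Neg a)
  show ?case
    unfolding sat.simps by (rule locally_constant_at_comp) (use Neg in simp)
next
  case (Conj a b)
  show ?case
    unfolding sat.simps by (rule locally_constant_at_comp2) (use Conj in simp_all)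
next
  case (Disj a b)
  show ?case
    unfolding sat.simps by (rule locally_constant_at_comp2) (use Disj in simp_all)
next
  case (Imp a b)
  show ?case
    unfolding sat.simps by (rule locally_constant_at_comp2) (use Imp in simp_all)
qed (simp_all add: locally_constant_at_const)

lemma eval_cong_fv: "\<forall>x\<in>fv_trm t. s x = s' x \<Longrightarrow> eval f s t = eval f s' t"
proof (induction t arbitrary: s s')
  case (FnSym n w ts)
  then have "\<forall>t\<in>set ts. eval f s t = eval f s' t"
    by auto
  then show ?case
    by (simp cong: map_cong)
next
  case (GSym G ts)
  then have "\<forall>t\<in>set ts. eval f s t = eval f s' t"
    by auto
  then show ?case
    by (simp cong: map_cong)
next
  case (FSym t)
  then have "eval f s t = eval f s' t"
    by simp
  then show ?case
    by simp
next
  case (Ell G u x v)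
  have "eval f s v = eval f s' v" and "\<And>i. eval f (s(x := i)) u = eval f (s'(x := i)) u"
    using Ell by auto
  then show ?case
    by simp
qed auto

lemma sat_cong_fv: "\<forall>x\<in>fv_fm \<phi>. s x = s' x \<Longrightarrow> sat f s \<phi> = sat f s' \<phi>"
proof (induction \<phi> arbitrary: s s')
  case (Eq t u)
  then show ?case
    using eval_cong_fv[of t s s' f] eval_cong_fv[of u s s' f] by auto
next
  case (PredSym n p ts)
  then have "\<forall>t\<in>set ts. eval f s t = eval f s' t"
    using eval_cong_fv by auto
  then show ?case
    by (simp cong: map_cong)
next
  case (All x a)
  have "\<And>n. sat f (s(x := n)) a = sat f (s'(x := n)) a"
    using All by auto
  then show ?case
    by simp
next
  case (Ex x a)
  have "\<And>n. sat f (s(x := n)) a = sat f (s'(x := n)) a"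
    using Ex by auto
  then show ?case
    by simp
next
  case (Conj a b)
  then have "sat f s a = sat f s' a" and "sat f s b = sat f s' b"
    by simp_all
  then show ?case
    by simp
next
  case (Disj a b)
  then have "sat f s a = sat f s' a" and "sat f s b = sat f s' b"
    by simp_all
  then show ?case
    by simp
next
  case (Imp a b)
  then have "sat f s a = sat f s' a" and "sat f s b = sat f s' b"
    by simp_all
  then show ?case
    by simp
qed auto

lemma models_iff_sat: "fv_fm \<phi> = {} \<Longrightarrow> models f \<phi> \<longleftrightarrow> sat f s \<phi>"
  unfolding models_def using sat_cong_fv[of \<phi>] by blast

lemma defines_set_All_Ex_iff:
  assumes "defines_set (All x (Ex y \<phi>)) S"
  shows "f \<in> S \<longleftrightarrow> (\<forall>a. \<exists>b. sat f (s(x := a, y := b)) \<phi>)"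
  using assms models_iff_sat[of "All x (Ex y \<phi>)" f s]
  unfolding defines_set_def sentence_def by simp

lemma defines_set_Ex_All_iff:
  assumes "defines_set (Ex x (All y \<phi>)) S"
  shows "f \<in> S \<longleftrightarrow> (\<exists>a. \<forall>b. sat f (s(x := a, y := b)) \<phi>)"
  using assms models_iff_sat[of "Ex x (All y \<phi>)" f s]
  unfolding defines_set_def sentence_def by simp

lemma guesserI:
  assumes "\<And>\<sigma>. G \<sigma> \<in> {0, 1}"
    and "\<And>f. eventually (\<lambda>n. G (map f [0..<Suc n]) = (if f \<in> S then 1 else 0)) sequentially"
  shows "guesser G S"
  unfolding guesser_def
proof (intro conjI allI)
  fix f
  obtain N where "\<forall>n\<ge>N. G (map f [0..<Suc n]) = (if f \<in> S then 1 else 0)"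
    using assms(2) unfolding eventually_sequentially by blast
  then show "\<exists>m>0. \<forall>n>m. G (map f [0..<Suc n]) = (if f \<in> S then 1 else 0)"
    by (intro exI[of _ "Suc N"]) auto
qed (use assms(1) in blast)

lemma guesser_eventually_correct:
  assumes "guesser G S"
  shows "eventually (\<lambda>n. G (map f [0..<Suc n]) = 1 \<longleftrightarrow> f \<in> S) sequentially"
proof -
  obtain m where "\<forall>n>m. G (map f [0..<Suc n]) = (if f \<in> S then 1 else 0)"
    using assms unfolding guesser_def by blast
  then show ?thesis
    unfolding eventually_sequentially by (intro exI[of _ "Suc m"]) auto
qed

lemma all_ex_add_iff_limit:
  assumes "eventually (\<lambda>n. P n \<longleftrightarrow> c) sequentially"
  shows "(\<forall>a. \<exists>b. P (a + b)) \<longleftrightarrow> c"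
proof -
  obtain N where N: "\<And>n. N \<le> n \<Longrightarrow> P n \<longleftrightarrow> c"
    using assms unfolding eventually_sequentially by blast
  show ?thesis
  proof
    assume "\<forall>a. \<exists>b. P (a + b)"
    then obtain b where "P (N + b)"
      by blast
    then show c
      using N[of "N + b"] by simp
  next
    assume c
    then show "\<forall>a. \<exists>b. P (a + b)"
      using N by (metis le_add2)
  qed
qed

lemma ex_all_add_iff_limit:
  assumes "eventually (\<lambda>n. P n \<longleftrightarrow> c) sequentially"
  shows "(\<exists>a. \<forall>b. P (a + b)) \<longleftrightarrow> c"
proof -
  obtain N where N: "\<And>n. N \<le> n \<Longrightarrow> P n \<longleftrightarrow> c"
    using assms unfolding eventually_sequentially by blast
  show ?thesis
  proof
    assume "\<exists>a. \<forall>b. P (a + b)"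
    then obtain a where "P (a + N)"
      by blast
    then show c
      using N[of "a + N"] by simp
  next
    assume c
    then show "\<exists>a. \<forall>b. P (a + b)"
      using N by (metis le_add1)
  qed
qed

definition guess_formula :: "(nat list \<Rightarrow> nat) \<Rightarrow> fm" where
  "guess_formula G = Eq (Ell G (FSym (Var 2)) 2 (FnSym 2 (\<lambda>l. l ! 0 + l ! 1) [Var 0, Var 1])) (Cst 1)"

lemma qfree_guess_formula: "qfree (guess_formula G)"
  by (simp add: guess_formula_def)

lemma sat_guess_formula:
  "sat f s (guess_formula G) \<longleftrightarrow> G (map f [0..<Suc (s 0 + s 1)]) = 1"
  by (simp add: guess_formula_def del: upt_Suc)

lemma guess_formula_defines:
  assumes "guesser G S"
  shows "defines_set (All 0 (Ex 1 (guess_formula G))) S"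
    and "defines_set (Ex 0 (All 1 (guess_formula G))) S"
proof -
  have limit: "eventually (\<lambda>n. G (map f [0..<Suc n]) = 1 \<longleftrightarrow> f \<in> S) sequentially" for f
    using assms by (rule guesser_eventually_correct)
  have "sentence (All 0 (Ex 1 (guess_formula G)))" and "sentence (Ex 0 (All 1 (guess_formula G)))"
    by (auto simp: sentence_def guess_formula_def)
  moreover have
    "models f (All 0 (Ex 1 (guess_formula G))) \<longleftrightarrow> (\<forall>a. \<exists>b. G (map f [0..<Suc (a + b)]) = 1)"
    "models f (Ex 0 (All 1 (guess_formula G))) \<longleftrightarrow> (\<exists>a. \<forall>b. G (map f [0..<Suc (a + b)]) = 1)" for f
    by (simp_all add: models_def sat_guess_formula del: upt_Suc)
  ultimately show "defines_set (All 0 (Ex 1 (guess_formula G))) S"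
    and "defines_set (Ex 0 (All 1 (guess_formula G))) S"
    unfolding defines_set_def
    using all_ex_add_iff_limit[OF limit] ex_all_add_iff_limit[OF limit] by simp_all
qed

definition refutes :: "(nat \<Rightarrow> (nat \<Rightarrow> nat) \<Rightarrow> nat \<Rightarrow> bool) \<Rightarrow> nat list \<Rightarrow> nat \<Rightarrow> bool" where
  "refutes R \<sigma> c \<longleftrightarrow> (\<exists>b. \<forall>g. map g [0..<length \<sigma>] = \<sigma> \<longrightarrow> \<not> R c g b)"

lemma not_refutes_prefix:
  assumes "\<forall>b. R c f b"
  shows "\<not> refutes R (map f [0..<n]) c"
  using assms unfolding refutes_def by auto

lemma eventually_refutes_prefix:
  assumes "locally_constant_at (\<lambda>g. R c g b) f" and "\<not> R c f b"
  shows "eventually (\<lambda>n. refutes R (map f [0..<n]) c) sequentially"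
proof -
  obtain N where N: "\<And>g. \<forall>i<N. g i = f i \<Longrightarrow> R c g b = R c f b"
    using assms(1) unfolding locally_constant_at_def by blast
  show ?thesis
  proof (rule eventually_sequentiallyI[of N])
    fix n assume "N \<le> n"
    have "\<not> R c g b" if "map g [0..<n] = map f [0..<n]" for g
    proof -
      have "\<forall>i<N. g i = f i"
        using that \<open>N \<le> n\<close> by (auto simp: map_eq_conv)
      then show ?thesis
        using N assms(2) by blast
    qed
    then show "refutes R (map f [0..<n]) c"
      unfolding refutes_def by auto
  qed
qed

lemma guessable_by_enumeration:
  fixes R :: "nat \<Rightarrow> (nat \<Rightarrow> nat) \<Rightarrow> nat \<Rightarrow> bool" and label :: "nat \<Rightarrow> bool"
  assumes local: "\<And>c b f. locally_constant_at (\<lambda>g. R c g b) f"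
    and witness: "\<And>f. \<exists>c. \<forall>b. R c f b"
    and label: "\<And>c f. \<forall>b. R c f b \<Longrightarrow> f \<in> S \<longleftrightarrow> label c"
  shows "guessable S"
proof -
  define G :: "nat list \<Rightarrow> nat"
    where "G \<sigma> = (if label (LEAST c. \<not> refutes R \<sigma> c) then 1 else 0)" for \<sigma>
  have correct: "eventually (\<lambda>n. G (map f [0..<n]) = (if f \<in> S then 1 else 0)) sequentially" for f
  proof -
    define c\<^sub>0 where "c\<^sub>0 = (LEAST c. \<forall>b. R c f b)"
    have c\<^sub>0: "\<forall>b. R c\<^sub>0 f b"
      unfolding c\<^sub>0_def using witness by (rule LeastI_ex)
    have "eventually (\<lambda>n. \<forall>c\<in>{..<c\<^sub>0}. refutes R (map f [0..<n]) c) sequentially"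
    proof (rule eventually_ball_finite, safe)
      fix c assume "c < c\<^sub>0"
      then obtain b where "\<not> R c f b"
        using not_less_Least unfolding c\<^sub>0_def by blast
      then show "eventually (\<lambda>n. refutes R (map f [0..<n]) c) sequentially"
        using local by (rule eventually_refutes_prefix[rotated])
    qed
    then show ?thesis
    proof (rule eventually_mono)
      fix n assume "\<forall>c\<in>{..<c\<^sub>0}. refutes R (map f [0..<n]) c"
      then have "(LEAST c. \<not> refutes R (map f [0..<n]) c) = c\<^sub>0"
        using not_refutes_prefix[where R = R, OF c\<^sub>0]
        by (intro Least_equality) (auto simp: not_less[symmetric])
      then show "G (map f [0..<n]) = (if f \<in> S then 1 else 0)"
        using label[OF c\<^sub>0] by (simp add: G_def)
    qed
  qed
  have "guesser G S"
  proof (rule guesserI)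
    show "G \<sigma> \<in> {0, 1}" for \<sigma>
      by (simp add: G_def)
    show "eventually (\<lambda>n. G (map f [0..<Suc n]) = (if f \<in> S then 1 else 0)) sequentially" for f
      using eventually_sequentially_Suc[THEN iffD2, OF correct] .
  qed
  then show ?thesis
    unfolding guessable_def by blast
qed

lemma guessable_if_Pi2_and_Sigma2:
  fixes P Q :: "(nat \<Rightarrow> nat) \<Rightarrow> nat \<Rightarrow> nat \<Rightarrow> bool"
  assumes "\<And>a b f. locally_constant_at (\<lambda>g. P g a b) f"
    and "\<And>a b f. locally_constant_at (\<lambda>g. Q g a b) f"
    and "\<And>f. f \<in> S \<longleftrightarrow> (\<forall>a. \<exists>b. P f a b)"
    and "\<And>f. f \<in> S \<longleftrightarrow> (\<exists>a. \<forall>b. Q f a b)"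
  shows "guessable S"
proof (rule guessable_by_enumeration[where label = even])
  let ?R = "\<lambda>c g b. if even c then Q g (c div 2) b else \<not> P g (c div 2) b"
  show "locally_constant_at (\<lambda>g. ?R c g b) f" for c b f
    by (cases "even c") (simp_all add: assms(2) locally_constant_at_comp[OF assms(1)])
  show "\<exists>c. \<forall>b. ?R c f b" for f
  proof (cases "f \<in> S")
    case True
    then obtain a where "\<forall>b. Q f a b"
      using assms(4) by blast
    then show ?thesis
      by (intro exI[of _ "2 * a"]) simp
  next
    case False
    then obtain a where "\<forall>b. \<not> P f a b"
      using assms(3) by blast
    then show ?thesis
      by (intro exI[of _ "2 * a + 1"]) simp
  qed
  show "f \<in> S \<longleftrightarrow> even c" if "\<forall>b. ?R c f b" for c f
  proof (cases "even c")
    case True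
    with that have "\<forall>b. Q f (c div 2) b"
      by simp
    with True show ?thesis
      using assms(4) by blast
  next
    case False
    with that have "\<forall>b. \<not> P f (c div 2) b"
      by simp
    with False show ?thesis
      using assms(3) by blast
  qed
qed

theorem theorem4p7:
  fixes S :: "(nat \<Rightarrow> nat) set"
  shows "guessable S \<longleftrightarrow>
    (\<exists>x y \<phi>. qfree \<phi> \<and> defines_set (All x (Ex y \<phi>)) S) \<and>
    (\<exists>x y \<psi>. qfree \<psi> \<and> defines_set (Ex x (All y \<psi>)) S)"
proof
  assume "guessable S"
  then obtain G where "guesser G S"
    unfolding guessable_def by blast
  then show "(\<exists>x y \<phi>. qfree \<phi> \<and> defines_set (All x (Ex y \<phi>)) S) \<and>
    (\<exists>x y \<psi>. qfree \<psi> \<and> defines_set (Ex x (All y \<psi>)) S)"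
    using qfree_guess_formula guess_formula_defines by blast
next
  assume "(\<exists>x y \<phi>. qfree \<phi> \<and> defines_set (All x (Ex y \<phi>)) S) \<and>
    (\<exists>x y \<psi>. qfree \<psi> \<and> defines_set (Ex x (All y \<psi>)) S)"
  then obtain x y \<phi> x' y' \<psi> where "qfree \<phi>" "defines_set (All x (Ex y \<phi>)) S"
    and "qfree \<psi>" "defines_set (Ex x' (All y' \<psi>)) S"
    by blast
  then show "guessable S"
    by (intro guessable_if_Pi2_and_Sigma2[where P = "\<lambda>f a b. sat f ((\<lambda>_. 0)(x := a, y := b)) \<phi>"
          and Q = "\<lambda>f a b. sat f ((\<lambda>_. 0)(x' := a, y' := b)) \<psi>"])
      (simp_all add: locally_constant_at_sat defines_set_All_Ex_iff defines_set_Ex_All_iff)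
qed

end
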